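(* Let $n$ be a non-negative integer and $r,s\in\mathbb{C}\setminus\mathbb{Z}^{-}$ with $s\ne0$ and $r-s\notin\mathbb{Z}^{-}$. Then \[ \sum_{k=0}^{n}(-1)^{k}\frac{\binom{n}{k}}{\binom{k+r}{s}}H_k^{(2)}=\frac{s}{r-s+1}\left(\frac{H_n^{(2)}}{\binom{n+r}{r-s+1}}-\sum_{k=1}^{n}\frac{H_n-H_{n-k}}{k\binom{n-k+r}{r-s+1}}\right). \]
   Context: $\mathbb{Z}^{-}$ denotes the set of negative integers. For integers $m\ge0$, $H_m=\sum_{j=1}^m1/j$ and $H_m^{(2)}=\sum_{j=1}^m1/j^2$. Binomial coefficients with complex entries: $\binom{x}{y}=\frac{\Gamma(x+1)}{\Gamma(y+1)\Gamma(x-y+1)}$. *)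

theory Defs
  imports "HOL-Analysis.Analysis"
begin

definition cbinom :: "complex \<Rightarrow> complex \<Rightarrow> complex" where
  "cbinom x y = Gamma (x + 1) / (Gamma (y + 1) * Gamma (x - y + 1))"

definition neg_Ints :: "complex set" where
  "neg_Ints = {of_int k | k. k < 0}"

definition H1 :: "nat \<Rightarrow> complex" where
  "H1 m = (\<Sum>j=1..m. 1 / of_nat j)"

definition H2 :: "nat \<Rightarrow> complex" where
  "H2 m = (\<Sum>j=1..m. 1 / (of_nat j)^2)"

end

theory Submission
  imports Defs
begin

text \<open>
  Put D_N f = sum_t (-1)^t (N choose t) f t, i.e. (-1)^N times the N-th forward difference of f at 0.
  A Chu-Vandermonde type identity, D_k ((s)_i / (r+1)_i) = (r-s+1)_k / (r+1)_k, shows that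
  1 / binom(k+r, s) = D_k Q with Q m = s / (r-s+1) / binom(m+r, r-s+1).  Substituting this and
  exchanging the order of summation, the left-hand side becomes sum_i (n choose i) D_(n-i) (H2 (i + _)) Q i.
  Since the forward difference of H2 is 1/(t+1)^2, and D_M (1/(x+t)^2) = M!/(x)_(M+1) sum_(m<=M) 1/(x+m),
  the coefficient of Q i is -(H_n - H_i)/(n - i) for i < n and H2 n for i = n.
\<close>

definition alt_binom_sum :: "nat \<Rightarrow> (nat \<Rightarrow> 'a::comm_ring_1) \<Rightarrow> 'a" where
  "alt_binom_sum N f = (\<Sum>t\<le>N. (-1)^t * of_nat (N choose t) * f t)"

lemma alt_binom_sum_0 [simp]: "alt_binom_sum 0 f = f 0"
  by (simp add: alt_binom_sum_def)

lemma alt_binom_sum_cmult: "alt_binom_sum N (\<lambda>t. c * f t) = c * alt_binom_sum N f"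
  by (simp add: alt_binom_sum_def sum_distrib_left ac_simps)

lemma alt_binom_sum_diff:
  "alt_binom_sum N (\<lambda>t. f t - g t) = alt_binom_sum N f - alt_binom_sum N g"
  by (simp add: alt_binom_sum_def algebra_simps sum_subtractf)

lemma alt_binom_sum_Suc:
  "alt_binom_sum (Suc N) f = alt_binom_sum N f - alt_binom_sum N (\<lambda>t. f (Suc t))"
proof -
  have pascal: "(-1)^Suc t * of_nat (Suc N choose Suc t) * f (Suc t)
      = (-1)^Suc t * of_nat (N choose Suc t) * f (Suc t) - (-1)^t * of_nat (N choose t) * f (Suc t)"
    for t
    by (simp add: algebra_simps)
  have "alt_binom_sum (Suc N) f = f 0 + (\<Sum>t\<le>N. (-1)^Suc t * of_nat (N choose Suc t) * f (Suc t))
      - alt_binom_sum N (\<lambda>t. f (Suc t))"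
    unfolding alt_binom_sum_def
    by (subst sum.atMost_Suc_shift) (simp only: pascal sum_subtractf, simp)
  also have "f 0 + (\<Sum>t\<le>N. (-1)^Suc t * of_nat (N choose Suc t) * f (Suc t))
      = (\<Sum>t\<le>Suc N. (-1)^t * of_nat (N choose t) * f t)"
    by (subst sum.atMost_Suc_shift) simp
  also have "\<dots> = alt_binom_sum N f"
    by (simp add: alt_binom_sum_def binomial_eq_0)
  finally show ?thesis .
qed

lemma alt_binom_sum_Suc_difference:
  "alt_binom_sum (Suc N) f = - alt_binom_sum N (\<lambda>t. f (Suc t) - f t)"
  by (simp add: alt_binom_sum_Suc alt_binom_sum_diff)

lemma plus_one_notin_nonpos_Ints:
  "(z :: 'a :: ring_1) \<notin> \<int>\<^sub>\<le>\<^sub>0 \<Longrightarrow> z + 1 \<notin> \<int>\<^sub>\<le>\<^sub>0"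
  using plus_one_in_nonpos_Ints_imp by blast

lemma plus_of_nat_nonzero_if_notin_nonpos_Ints:
  "(x :: 'a :: ring_1) \<notin> \<int>\<^sub>\<le>\<^sub>0 \<Longrightarrow> x + of_nat n \<noteq> 0"
  using plus_of_nat_eq_0_imp by blast

lemma pochhammer_nonzero_if_notin_nonpos_Ints:
  "(x :: 'a :: field_char_0) \<notin> \<int>\<^sub>\<le>\<^sub>0 \<Longrightarrow> pochhammer x n \<noteq> 0"
  using pochhammer_eq_0_imp_nonpos_Int by blast

lemma pochhammer_eq_Suc_divide:
  fixes x :: "'a :: field_char_0"
  assumes "x \<notin> \<int>\<^sub>\<le>\<^sub>0"
  shows "pochhammer x n = pochhammer x (Suc n) / (x + of_nat n)"
    and "pochhammer (x + 1) n = pochhammer x (Suc n) / x"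
proof -
  show "pochhammer x n = pochhammer x (Suc n) / (x + of_nat n)"
    using plus_of_nat_nonzero_if_notin_nonpos_Ints[OF assms, of n]
    by (simp add: pochhammer_Suc)
  show "pochhammer (x + 1) n = pochhammer x (Suc n) / x"
    using plus_of_nat_nonzero_if_notin_nonpos_Ints[OF assms, of 0]
    by (simp add: pochhammer_rec)
qed

lemma alt_binom_sum_pochhammer_ratio:
  fixes b c :: "'a :: field_char_0"
  assumes "c \<notin> \<int>\<^sub>\<le>\<^sub>0"
  shows "alt_binom_sum k (\<lambda>i. pochhammer b i / pochhammer c i) = pochhammer (c - b) k / pochhammer c k"
  using assms
proof (induction k arbitrary: b c)
  case 0
  then show ?case by simp
next
  case (Suc k)
  have c1: "c + 1 \<notin> \<int>\<^sub>\<le>\<^sub>0"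
    using Suc.prems by (rule plus_one_notin_nonpos_Ints)
  have "alt_binom_sum k (\<lambda>i. pochhammer b (Suc i) / pochhammer c (Suc i))
      = b / c * (pochhammer (c - b) k / pochhammer (c + 1) k)"
  proof -
    have "(\<lambda>i. pochhammer b (Suc i) / pochhammer c (Suc i))
        = (\<lambda>i. b / c * (pochhammer (b + 1) i / pochhammer (c + 1) i))"
      by (simp add: pochhammer_rec fun_eq_iff)
    then show ?thesis
      using Suc.IH[OF c1, of "b + 1"] by (simp only: alt_binom_sum_cmult) simp
  qed
  then have "alt_binom_sum (Suc k) (\<lambda>i. pochhammer b i / pochhammer c i) =
      pochhammer (c - b) k / pochhammer c k - b / c * (pochhammer (c - b) k / pochhammer (c + 1) k)"
    using Suc.IH[OF Suc.prems, of b] by (simp only: alt_binom_sum_Suc)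
  also have "\<dots> = pochhammer (c - b) k * ((c + of_nat k) - b) / pochhammer c (Suc k)"
    using pochhammer_nonzero_if_notin_nonpos_Ints[OF Suc.prems, of "Suc k"]
      plus_of_nat_nonzero_if_notin_nonpos_Ints[OF Suc.prems, of 0]
    unfolding pochhammer_eq_Suc_divide[OF Suc.prems, of k] by (simp add: field_simps)
  also have "\<dots> = pochhammer (c - b) (Suc k) / pochhammer c (Suc k)"
    by (simp add: pochhammer_Suc algebra_simps)
  finally show ?case .
qed

lemma alt_binom_sum_inverse_square:
  fixes x :: "'a :: field_char_0"
  assumes "x \<notin> \<int>\<^sub>\<le>\<^sub>0"
  shows "alt_binom_sum N (\<lambda>t. 1 / (x + of_nat t)^2)
    = fact N / pochhammer x (Suc N) * (\<Sum>m\<le>N. 1 / (x + of_nat m))"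
  using assms
proof (induction N arbitrary: x)
  case 0
  then show ?case by (simp add: power2_eq_square)
next
  case (Suc N)
  define S where "S = (\<Sum>m\<le>Suc N. 1 / (x + of_nat m))"
  define u where "u = x + of_nat (Suc N)"
  define P where "P = pochhammer x (Suc (Suc N))"
  have x1: "x + 1 \<notin> \<int>\<^sub>\<le>\<^sub>0"
    using Suc.prems by (rule plus_one_notin_nonpos_Ints)
  have "x \<noteq> 0" "u \<noteq> 0" "P \<noteq> 0"
    unfolding u_def P_def
    using plus_of_nat_nonzero_if_notin_nonpos_Ints[OF Suc.prems]
      pochhammer_nonzero_if_notin_nonpos_Ints[OF Suc.prems]
    by (metis add_0_right of_nat_0)+
  have "(\<Sum>m\<le>N. 1 / (x + of_nat m)) = S - 1 / u"
    unfolding S_def u_def by simp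
  moreover have "(\<Sum>m\<le>N. 1 / (x + 1 + of_nat m)) = S - 1 / x"
    unfolding S_def by (subst sum.atMost_Suc_shift) (simp add: add_ac)
  ultimately have "alt_binom_sum (Suc N) (\<lambda>t. 1 / (x + of_nat t)^2) =
      fact N / (P / u) * (S - 1 / u) - fact N / (P / x) * (S - 1 / x)"
    using Suc.IH[OF Suc.prems] Suc.IH[OF x1]
    unfolding pochhammer_eq_Suc_divide[OF Suc.prems, of "Suc N"] P_def[symmetric] u_def[symmetric]
    by (simp add: alt_binom_sum_Suc add_ac)
  also have "\<dots> = fact N * ((u * S - 1) - (x * S - 1)) / P"
    using \<open>x \<noteq> 0\<close> \<open>u \<noteq> 0\<close> \<open>P \<noteq> 0\<close> by (simp add: divide_simps) algebra
  also have "\<dots> = fact (Suc N) / P * S"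
    by (simp add: u_def algebra_simps)
  finally show ?case
    unfolding S_def P_def .
qed

lemma alt_sum_choose_mult_choose:
  assumes "i \<le> n"
  shows "(\<Sum>k\<le>n. (-1)^(k + i) * of_nat (n choose k) * of_nat (k choose i) * h k)
    = of_nat (n choose i) * alt_binom_sum (n - i) (\<lambda>t. h (i + t))"
proof -
  have "(\<Sum>k\<le>n. (-1)^(k + i) * of_nat (n choose k) * of_nat (k choose i) * h k)
      = (\<Sum>k\<in>{i..n}. (-1)^(k + i) * of_nat (n choose k) * of_nat (k choose i) * h k)"
    by (rule sum.mono_neutral_right) (auto simp: binomial_eq_0)
  also have "\<dots> = (\<Sum>t\<le>n - i. (-1)^(i + t + i) * of_nat (n choose (i + t)) * of_nat ((i + t) choose i) * h (i + t))"
    by (rule sum.reindex_bij_witness[of _ "\<lambda>t. i + t" "\<lambda>k. k - i"]) (use assms in auto)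
  also have "\<dots> = (\<Sum>t\<le>n - i. of_nat (n choose i) * ((-1)^t * of_nat ((n - i) choose t) * h (i + t)))"
  proof (rule sum.cong)
    fix t assume "t \<in> {..n - i}"
    then have "(n choose (i + t)) * ((i + t) choose i) = (n choose i) * ((n - i) choose t)"
      using choose_mult[of i "i + t" n] assms by simp
    moreover have "(-1 :: 'a)^(i + t + i) = (-1)^t"
      by (simp add: power_add power_mult mult_2 [symmetric] add.commute[of i t] add.assoc)
    ultimately show "(-1)^(i + t + i) * of_nat (n choose (i + t)) * of_nat ((i + t) choose i) * h (i + t)
        = of_nat (n choose i) * ((-1)^t * of_nat ((n - i) choose t) * h (i + t))"
      by (metis (no_types, lifting) mult.assoc mult.left_commute of_nat_mult)
  qed simp
  also have "\<dots> = of_nat (n choose i) * alt_binom_sum (n - i) (\<lambda>t. h (i + t))"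
    by (simp add: alt_binom_sum_def sum_distrib_left)
  finally show ?thesis .
qed

lemma alt_binom_sum_nested:
  "(\<Sum>k\<le>n. (-1)^k * of_nat (n choose k) * alt_binom_sum k P * h k)
    = (\<Sum>i\<le>n. of_nat (n choose i) * alt_binom_sum (n - i) (\<lambda>t. h (i + t)) * P i)"
proof -
  have extend: "alt_binom_sum k P = (\<Sum>i\<le>n. (-1)^i * of_nat (k choose i) * P i)" if "k \<le> n" for k
    unfolding alt_binom_sum_def
    by (rule sum.mono_neutral_left) (use that in \<open>auto simp: binomial_eq_0\<close>)
  have "(\<Sum>k\<le>n. (-1)^k * of_nat (n choose k) * alt_binom_sum k P * h k)
      = (\<Sum>k\<le>n. \<Sum>i\<le>n. P i * ((-1)^(k + i) * of_nat (n choose k) * of_nat (k choose i) * h k))"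
    by (intro sum.cong refl) (simp add: extend sum_distrib_left sum_distrib_right power_add ac_simps)
  also have "\<dots> = (\<Sum>i\<le>n. P i * (\<Sum>k\<le>n. (-1)^(k + i) * of_nat (n choose k) * of_nat (k choose i) * h k))"
    by (subst sum.swap) (simp add: sum_distrib_left)
  also have "\<dots> = (\<Sum>i\<le>n. of_nat (n choose i) * alt_binom_sum (n - i) (\<lambda>t. h (i + t)) * P i)"
    by (intro sum.cong refl) (simp add: alt_sum_choose_mult_choose)
  finally show ?thesis .
qed

lemma pochhammer_of_nat_plus_one:
  "pochhammer (of_nat i + 1 :: 'a :: field_char_0) m = of_nat ((i + m) choose m) * fact m"
  using gbinomial_pochhammer'[of "of_nat (i + m) :: 'a" m]
  by (simp add: binomial_gbinomial)

lemma H1_Suc: "H1 (Suc m) = H1 m + 1 / of_nat (Suc m)"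
  by (simp add: H1_def)

lemma H2_Suc: "H2 (Suc m) = H2 m + 1 / (of_nat (Suc m))^2"
  by (simp add: H2_def)

lemma H1_diff_eq_sum: "H1 (Suc i + M) - H1 i = (\<Sum>m\<le>M. 1 / (of_nat i + 1 + of_nat m))"
  by (induction M) (simp_all add: H1_Suc algebra_simps)

lemma alt_binom_sum_H2_shift:
  assumes "i < n"
  shows "of_nat (n choose i) * alt_binom_sum (n - i) (\<lambda>t. H2 (i + t)) = - (H1 n - H1 i) / of_nat (n - i)"
proof -
  obtain M where M: "n - i = Suc M"
    using assms by (metis Suc_diff_Suc)
  then have n: "n = i + Suc M"
    using assms by simp
  have i1: "of_nat i + 1 \<notin> (\<int>\<^sub>\<le>\<^sub>0 :: complex set)"
    using of_nat_in_nonpos_Ints_iff[of "Suc i"] by (simp add: add.commute)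
  have "alt_binom_sum (n - i) (\<lambda>t. H2 (i + t))
      = - alt_binom_sum M (\<lambda>t. 1 / (of_nat i + 1 + of_nat t)^2)"
    unfolding M alt_binom_sum_Suc_difference by (simp add: H2_Suc add_ac)
  also have "\<dots> = - (fact M / pochhammer (of_nat i + 1) (Suc M) * (H1 n - H1 i))"
    using H1_diff_eq_sum[of i M] n by (simp only: alt_binom_sum_inverse_square[OF i1]) simp
  also have "\<dots> = - (fact M / (of_nat (n choose Suc M) * fact (Suc M)) * (H1 n - H1 i))"
    by (simp only: pochhammer_of_nat_plus_one n)
  finally have diff: "alt_binom_sum (n - i) (\<lambda>t. H2 (i + t))
      = - (fact M / (of_nat (n choose Suc M) * fact (Suc M)) * (H1 n - H1 i))" .
  have "n choose i = n choose Suc M"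
    using binomial_symmetric[of i n] assms unfolding M by simp
  moreover have "(of_nat (n choose Suc M) :: complex) \<noteq> 0"
    using M by simp
  ultimately show ?thesis
    unfolding diff by (simp add: M field_simps del: of_nat_Suc)
qed

lemma sum_alt_binom_sum_mult_H2:
  "(\<Sum>k=0..n. (-1)^k * of_nat (n choose k) * alt_binom_sum k P * H2 k)
     = H2 n * P n - (\<Sum>k=1..n. (H1 n - H1 (n - k)) / of_nat k * P (n - k))"
proof -
  have "(\<Sum>k=0..n. (-1)^k * of_nat (n choose k) * alt_binom_sum k P * H2 k)
      = (\<Sum>i\<le>n. of_nat (n choose i) * alt_binom_sum (n - i) (\<lambda>t. H2 (i + t)) * P i)"
    by (simp add: atLeast0AtMost alt_binom_sum_nested)
  also have "\<dots> = H2 n * P n + (\<Sum>i<n. - (H1 n - H1 i) / of_nat (n - i) * P i)"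
    by (simp add: lessThan_Suc_atMost[symmetric] alt_binom_sum_H2_shift del: lessThan_Suc_atMost)
  also have "(\<Sum>i<n. - (H1 n - H1 i) / of_nat (n - i) * P i)
      = - (\<Sum>k=1..n. (H1 n - H1 (n - k)) / of_nat k * P (n - k))"
    unfolding sum_negf[symmetric]
    by (rule sum.reindex_bij_witness[of _ "\<lambda>k. n - k" "\<lambda>i. n - i"])
      (auto simp: minus_divide_left algebra_simps)
  finally show ?thesis
    by simp
qed

lemma plus_one_in_nonpos_Ints_iff_neg_Ints: "z + 1 \<in> \<int>\<^sub>\<le>\<^sub>0 \<longleftrightarrow> z \<in> neg_Ints"
proof
  assume "z + 1 \<in> \<int>\<^sub>\<le>\<^sub>0"
  then obtain m where "m \<le> 0" "z + 1 = of_int m"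
    by (auto elim!: nonpos_Ints_cases)
  then have "m - 1 < 0" "z = of_int (m - 1)"
    by (simp_all add: algebra_simps)
  then show "z \<in> neg_Ints"
    unfolding neg_Ints_def by blast
next
  assume "z \<in> neg_Ints"
  then obtain m where "m < 0" "z + 1 = of_int (m + 1)"
    unfolding neg_Ints_def by auto
  then show "z + 1 \<in> \<int>\<^sub>\<le>\<^sub>0"
    using nonpos_Ints_of_int[of "m + 1"] by simp
qed

lemma nonpos_Ints_eq_insert_neg_Ints: "\<int>\<^sub>\<le>\<^sub>0 = insert 0 neg_Ints"
  unfolding neg_Ints_def by (auto elim!: nonpos_Ints_cases intro!: nonpos_Ints_of_int)

lemma inverse_cbinom_plus_of_nat:
  assumes "r + 1 \<notin> \<int>\<^sub>\<le>\<^sub>0" and "r - y + 1 \<notin> \<int>\<^sub>\<le>\<^sub>0"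
  shows "1 / cbinom (of_nat k + r) y
    = Gamma (y + 1) * Gamma (r - y + 1) / Gamma (r + 1) * (pochhammer (r - y + 1) k / pochhammer (r + 1) k)"
proof -
  have "Gamma (r + 1) \<noteq> 0" "pochhammer (r + 1) k \<noteq> 0"
    using assms(1) by (simp_all add: Gamma_eq_zero_iff pochhammer_nonzero_if_notin_nonpos_Ints)
  moreover have "Gamma (of_nat k + r + 1) = pochhammer (r + 1) k * Gamma (r + 1)"
    using pochhammer_Gamma[OF assms(1), of k] calculation by (simp add: add_ac field_simps)
  moreover have "Gamma (of_nat k + r - y + 1) = pochhammer (r - y + 1) k * Gamma (r - y + 1)"
    using pochhammer_Gamma[OF assms(2), of k] assms(2)
    by (simp add: Gamma_eq_zero_iff add_ac field_simps)
  ultimately show ?thesis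
    unfolding cbinom_def by (simp add: field_simps)
qed

lemma inverse_cbinom_eq_alt_binom_sum:
  assumes r: "r + 1 \<notin> \<int>\<^sub>\<le>\<^sub>0" and s: "s \<notin> \<int>\<^sub>\<le>\<^sub>0" and a: "r - s + 1 \<notin> \<int>\<^sub>\<le>\<^sub>0"
  shows "1 / cbinom (of_nat k + r) s
    = alt_binom_sum k (\<lambda>m. s / (r - s + 1) / cbinom (of_nat m + r) (r - s + 1))"
proof -
  define a where "a = r - s + 1"
  define K where "K = Gamma (s + 1) * Gamma a / Gamma (r + 1)"
  have "a \<notin> \<int>\<^sub>\<le>\<^sub>0" "r - a + 1 = s" "r + 1 - s = a"
    using a by (simp_all add: a_def)
  have "s / a / cbinom (of_nat m + r) a = K * (pochhammer s m / pochhammer (r + 1) m)" for m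
  proof -
    have "a \<noteq> 0"
      using \<open>a \<notin> \<int>\<^sub>\<le>\<^sub>0\<close> by auto
    have "1 / cbinom (of_nat m + r) a
        = a * Gamma a * Gamma s / Gamma (r + 1) * (pochhammer s m / pochhammer (r + 1) m)"
      using inverse_cbinom_plus_of_nat[OF r, of a m] \<open>r - a + 1 = s\<close> s
        Gamma_plus1[OF \<open>a \<notin> \<int>\<^sub>\<le>\<^sub>0\<close>] by simp
    then have "s / a / cbinom (of_nat m + r) a
        = s / a * (a * Gamma a * Gamma s / Gamma (r + 1) * (pochhammer s m / pochhammer (r + 1) m))"
      by (metis times_divide_eq_right mult.right_neutral)
    then show ?thesis
      unfolding K_def Gamma_plus1[OF s] using \<open>a \<noteq> 0\<close> by (simp add: field_simps)
  qed
  then have "alt_binom_sum k (\<lambda>m. s / a / cbinom (of_nat m + r) a)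
      = K * (pochhammer a k / pochhammer (r + 1) k)"
    by (simp only: alt_binom_sum_cmult alt_binom_sum_pochhammer_ratio[OF r] \<open>r + 1 - s = a\<close>)
  also have "\<dots> = 1 / cbinom (of_nat k + r) s"
    unfolding K_def a_def inverse_cbinom_plus_of_nat[OF r a] ..
  finally show ?thesis
    unfolding a_def ..
qed

theorem theorem18:
  fixes n :: nat and r s :: complex
  assumes "r \<notin> neg_Ints" and "s \<notin> neg_Ints" and "s \<noteq> 0"
    and "r - s \<notin> neg_Ints"
  shows "(\<Sum>k=0..n. (-1)^k * of_nat (n choose k) / cbinom (of_nat k + r) s * H2 k)
       = s / (r - s + 1) *
         (H2 n / cbinom (of_nat n + r) (r - s + 1)
          - (\<Sum>k=1..n. (H1 n - H1 (n - k)) / (of_nat k * cbinom (of_nat (n - k) + r) (r - s + 1))))"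
proof -
  define Q where "Q m = s / (r - s + 1) / cbinom (of_nat m + r) (r - s + 1)" for m
  have "r + 1 \<notin> \<int>\<^sub>\<le>\<^sub>0" "r - s + 1 \<notin> \<int>\<^sub>\<le>\<^sub>0"
    using assms(1,4) by (simp_all add: plus_one_in_nonpos_Ints_iff_neg_Ints)
  moreover have "s \<notin> \<int>\<^sub>\<le>\<^sub>0"
    using assms(2,3) by (simp add: nonpos_Ints_eq_insert_neg_Ints)
  ultimately have "1 / cbinom (of_nat k + r) s = alt_binom_sum k Q" for k
    unfolding Q_def by (simp add: inverse_cbinom_eq_alt_binom_sum)
  then have "(\<Sum>k=0..n. (-1)^k * of_nat (n choose k) / cbinom (of_nat k + r) s * H2 k)
      = (\<Sum>k=0..n. (-1)^k * of_nat (n choose k) * alt_binom_sum k Q * H2 k)"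
    by (metis (no_types, lifting) times_divide_eq_right mult.right_neutral)
  also have "\<dots> = H2 n * Q n - (\<Sum>k=1..n. (H1 n - H1 (n - k)) / of_nat k * Q (n - k))"
    by (rule sum_alt_binom_sum_mult_H2)
  also have "\<dots> = s / (r - s + 1) *
         (H2 n / cbinom (of_nat n + r) (r - s + 1)
          - (\<Sum>k=1..n. (H1 n - H1 (n - k)) / (of_nat k * cbinom (of_nat (n - k) + r) (r - s + 1))))"
    unfolding right_diff_distrib sum_distrib_left Q_def
    by (intro arg_cong2[where f = minus] sum.cong refl) (simp_all add: mult_ac)
  finally show ?thesis .
qed

end
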